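(* Let $m \equiv 3 \pmod 4$ with $m > 3$, $n = 3^m - 1$, $v = (3^{(m-1)/2}-1)/2$ and $\delta = (3^{(m-1)/2}+11)/2$. Then $\gcd(v,n) = 1$, and, setting $T_{(1,2,m)}(v) = \{ vi \bmod n : i \in T_{(1,2,m)}\}$, we have $\{1, 2, \ldots, \delta-1\} \subseteq T_{(1,2,m)}(v)$.
   Context: For an integer $0 \le j \le n-1$ with $3$-adic expansion $j = \sum_{t=0}^{m-1} j_t 3^t$, $j_t \in \{0,1,2\}$, let $w_3(j) = \sum_{t=0}^{m-1} j_t$. For distinct $i_1,i_2 \in \{0,1,2,3\}$, $T_{(i_1,i_2,m)} = \{1 \le j \le n-1 : w_3(j) \equiv i_1 \text{ or } i_2 \pmod 4\}$. For an integer $b$, $b \bmod n$ is the unique $b_0 \in \{0,\ldots,n-1\}$ with $b \equiv b_0 \pmod n$. *)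

theory Defs
  imports Main
begin

fun w3 :: "nat \<Rightarrow> nat" where
  "w3 j = (if j = 0 then 0 else j mod 3 + w3 (j div 3))"

definition T_set :: "nat \<Rightarrow> nat \<Rightarrow> nat \<Rightarrow> nat set" where
  "T_set i1 i2 m = {j. 1 \<le> j \<and> j \<le> 3^m - 2 \<and> (w3 j mod 4 = i1 mod 4 \<or> w3 j mod 4 = i2 mod 4)}"

end

theory Submission
  imports Defs
begin

text \<open>
  Write \<open>P = 3^h\<close> with \<open>m = 2h + 1\<close>, so that \<open>P = 2v + 1\<close> and \<open>n = 3P\<^sup>2 - 1 = 2(v(3P + 3) + 1)\<close>;
  in particular \<open>v\<close> is coprime to \<open>n\<close> as soon as \<open>v\<close> is odd, i.e. \<open>h\<close> is odd.
  For even \<open>X\<close> the number \<open>x = X(3P + 3) + r\<close> satisfies \<open>v x \<equiv> r v - X (mod n)\<close>, and its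
  3-adic expansion is that of \<open>X\<close> followed by that of \<open>3X + r\<close>, so \<open>w\<^sub>3(x) = 2 w\<^sub>3(X) + r\<close>
  (for \<open>r = 3\<close> and \<open>X mod 3 \<noteq> 2\<close> the carry gives \<open>2 w\<^sub>3(X) + 1\<close>). Since \<open>w\<^sub>3(X) \<equiv> X (mod 2)\<close>,
  this is \<open>1\<close> or \<open>2\<close> modulo 4. Every \<open>a \<le> v + 5\<close> is \<open>r v - X\<close> for a suitable even \<open>X < P - 1\<close>:
  take \<open>r = 2\<close> for even \<open>a\<close>, \<open>r = 1\<close> for odd \<open>a \<le> v\<close> and \<open>r = 3\<close> for \<open>a \<in> {v + 2, v + 4}\<close>.
\<close>

lemma w3_mod_div: "w3 j = j mod 3 + w3 (j div 3)"
  by (subst w3.simps) simp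

declare w3.simps [simp del]

lemma w3_0 [simp]: "w3 0 = 0"
  by (simp add: w3.simps)

lemma w3_mult_3_add: "r < 3 \<Longrightarrow> w3 (3 * q + r) = w3 q + r"
  by (subst w3_mod_div) simp

lemma w3_mult_power_add:
  "b < 3 ^ k \<Longrightarrow> w3 (a * 3 ^ k + b) = w3 a + w3 b"
proof (induction k arbitrary: b)
  case 0
  then show ?case by simp
next
  case (Suc k)
  have digits: "a * 3 ^ Suc k + b = 3 * (a * 3 ^ k + b div 3) + b mod 3"
    by simp
  have "w3 (a * 3 ^ Suc k + b) = w3 (a * 3 ^ k + b div 3) + b mod 3"
    by (subst digits) (rule w3_mult_3_add; simp)
  also have "\<dots> = w3 a + w3 b"
    using Suc by (simp add: w3_mod_div [of b])
  finally show ?case .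
qed

lemma even_w3_iff: "even (w3 j) \<longleftrightarrow> even j"
proof (induction j rule: less_induct)
  case (less j)
  show ?case
  proof (cases "j = 0")
    case False
    then have "even (w3 j) \<longleftrightarrow> (even (j mod 3) \<longleftrightarrow> even (j div 3))"
      using less.IH [of "j div 3"] by (simp add: w3_mod_div [of j])
    also have "\<dots> \<longleftrightarrow> even j"
      using even_add [of "3 * (j div 3)" "j mod 3"] by auto
    finally show ?thesis .
  qed simp
qed

lemma w3_Suc: "j mod 3 \<noteq> 2 \<Longrightarrow> w3 (Suc j) = Suc (w3 j)"
  using w3_mult_3_add [of "j mod 3 + 1" "j div 3"] w3_mod_div [of j] by simp

lemma w3_block:
  fixes X r h :: nat
  assumes "X + 1 < 3 ^ h" and "1 \<le> r" and "r \<le> 3" and "r = 3 \<Longrightarrow> X mod 3 \<noteq> 2"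
  shows "w3 (X * (3 * 3 ^ h + 3) + r) = 2 * w3 X + (if r = 3 then 1 else r)"
proof -
  have digits: "X * (3 * 3 ^ h + 3) + r = X * 3 ^ Suc h + (3 * X + r)"
    by (simp add: algebra_simps)
  have "3 * X + r < 3 ^ Suc h"
    using assms(1,3) by simp
  then have "w3 (X * (3 * 3 ^ h + 3) + r) = w3 X + w3 (3 * X + r)"
    unfolding digits by (rule w3_mult_power_add)
  also have "w3 (3 * X + r) = w3 X + (if r = 3 then 1 else r)"
  proof (cases "r = 3")
    case True
    then have "w3 (3 * X + r) = w3 (Suc X)"
      by (subst w3_mod_div) simp
    with True assms(4) show ?thesis
      by (simp add: w3_Suc)
  qed (use assms(3) w3_mult_3_add in simp)
  finally show ?thesis
    by simp
qed

lemma mult_block_mod: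
  fixes v c X a r :: nat
  assumes "even X" and "X + a = r * v" and "a < 2 * (v * c + 1)"
  shows "v * (X * c + r) mod (2 * (v * c + 1)) = a"
proof -
  obtain Y where X: "X = 2 * Y"
    using assms(1) by blast
  define n where "n = 2 * (v * c + 1)"
  \<comment> \<open>\<open>v X c = Y (n - 2) \<equiv> -X (mod n)\<close>\<close>
  have "v * (X * c + r) = a + Y * n"
    using assms(2) unfolding X n_def by (simp add: algebra_simps)
  with assms(3) show ?thesis
    unfolding n_def [symmetric] by simp
qed

lemma half_three_power_odd:
  fixes h :: nat
  assumes "odd h"
  shows "2 * ((3 ^ h - 1) div 2) + 1 = (3::nat) ^ h" and "odd ((3 ^ h - 1) div 2 :: nat)"
proof -
  obtain k where "h = 2 * k + 1"
    using assms by (rule oddE)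
  then have "(3::nat) ^ h = 3 * 9 ^ k"
    by (simp add: power_mult)
  moreover have "(9::nat) ^ k mod 4 = 1"
    using power_mod [of "9::nat" 4 k] by simp
  ultimately have "(3::nat) ^ h mod 4 = 3"
    by (simp add: mod_mult_right_eq [of 3 "9 ^ k" 4, symmetric])
  then obtain q where "(3::nat) ^ h = 4 * q + 3"
    by (metis div_mult_mod_eq mult.commute)
  then show "2 * ((3 ^ h - 1) div 2) + 1 = (3::nat) ^ h" and "odd ((3 ^ h - 1) div 2 :: nat)"
    by simp_all
qed

lemma three_power_odd_exp: "(3::nat) ^ (2 * h + 1) = 3 * 3 ^ h * 3 ^ h"
  by (simp add: power_add mult_2)

lemma three_power_odd_exp_minus_one:
  fixes v h :: nat
  assumes "2 * v + 1 = 3 ^ h"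
  shows "3 ^ (2 * h + 1) - 1 = 2 * (v * (3 * 3 ^ h + 3) + 1)"
proof -
  have "(3::nat) ^ (2 * h + 1) = 3 * (2 * v + 1) * (2 * v + 1)"
    by (simp only: three_power_odd_exp assms)
  also have "\<dots> = 2 * (v * (3 * (2 * v + 1) + 3) + 1) + 1"
    by algebra
  also have "\<dots> = 2 * (v * (3 * 3 ^ h + 3) + 1) + 1"
    by (simp only: assms)
  finally show ?thesis
    by simp
qed

lemma coprime_half_three_power:
  fixes h :: nat
  assumes "odd h"
  shows "coprime ((3 ^ h - 1) div 2 :: nat) (3 ^ (2 * h + 1) - 1)"
proof -
  define v :: nat where "v = (3 ^ h - 1) div 2"
  have v: "2 * v + 1 = 3 ^ h" and "odd v"
    unfolding v_def using half_three_power_odd [OF assms] by simp_all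
  have "coprime v (v * (3 * 3 ^ h + 3) + 1)"
    using gcd_add_mult [of v "3 * 3 ^ h + 3" 1] by (simp add: coprime_iff_gcd_eq_1 mult.commute)
  with \<open>odd v\<close> have "coprime v (2 * (v * (3 * 3 ^ h + 3) + 1))"
    by (simp only: coprime_mult_right_iff) simp
  then show ?thesis
    unfolding three_power_odd_exp_minus_one [OF v] v_def .
qed

lemma residue_in_T_image:
  fixes h v X a r :: nat
  assumes v: "2 * v + 1 = 3 ^ h"
    and "even X" and "X + a = r * v" and "1 \<le> r" and "r \<le> 3"
    and "X + 1 < 3 ^ h" and "r = 3 \<Longrightarrow> X mod 3 \<noteq> 2"
  shows "a \<in> (\<lambda>i. (v * i) mod (3 ^ (2 * h + 1) - 1)) ` T_set 1 2 (2 * h + 1)"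
proof
  define x where "x = X * (3 * 3 ^ h + 3) + r"
  have "a \<le> 3 * v"
    using assms(3,5) by (metis le_add2 le_trans mult_le_mono1)
  also have "\<dots> \<le> v * (3 * 3 ^ h + 3)"
    by simp
  finally have "v * x mod (2 * (v * (3 * 3 ^ h + 3) + 1)) = a"
    unfolding x_def by (intro mult_block_mod assms(2,3)) simp
  then show "a = v * x mod (3 ^ (2 * h + 1) - 1)"
    unfolding three_power_odd_exp_minus_one [OF v] by simp
  have "x + 2 \<le> 3 ^ (2 * h + 1)"
  proof -
    define P :: nat where "P = 3 ^ h"
    have "(X + 2) * (3 * P + 3) \<le> P * (3 * P + 3)"
      using assms(6) unfolding P_def by (intro mult_le_mono1) simp
    then have "X * (3 * P + 3) + r + 2 \<le> 3 * P * P"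
      using assms(5) by (simp add: algebra_simps)
    then show ?thesis
      unfolding x_def three_power_odd_exp P_def .
  qed
  moreover have "w3 x mod 4 = 1 \<or> w3 x mod 4 = 2"
  proof -
    obtain t where "w3 X = 2 * t"
      using \<open>even X\<close> even_w3_iff by blast
    then have "w3 x = 4 * t + (if r = 3 then 1 else r)"
      unfolding x_def using w3_block [OF assms(6,4,5,7)] by simp
    with assms(4,5) show ?thesis
      by (cases "r = 3") auto
  qed
  moreover have "1 \<le> x"
    using assms(4) unfolding x_def by simp
  ultimately show "x \<in> T_set 1 2 (2 * h + 1)"
    unfolding T_set_def by simp
qed

lemma initial_segment_subset_T_image:
  fixes h :: nat
  assumes "odd h" and "1 < h"
  defines "v \<equiv> (3 ^ h - 1) div 2"
  shows "{1..v + 5} \<subseteq> (\<lambda>i. (v * i) mod (3 ^ (2 * h + 1) - 1)) ` T_set 1 2 (2 * h + 1)"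
proof
  fix a
  assume a: "a \<in> {1..v + 5}"
  have v: "2 * v + 1 = 3 ^ h" and "odd v"
    unfolding v_def using half_three_power_odd [OF assms(1)] by simp_all
  have p: "(3::nat) ^ h = 3 * 3 ^ (h - 1)"
    using assms(2) by (simp add: power_eq_if)
  have "3 \<le> h"
    using assms(1,2) by presburger
  then have "(3::nat) ^ 3 \<le> 3 ^ h"
    by (rule power_increasing) simp
  then have "13 \<le> v"
    using v by simp
  consider "even a" | "odd a" "a \<le> v" | "a = v + 2" | "a = v + 4"
  proof -
    have "even a \<or> odd a \<and> a \<le> v \<or> a = v + 2 \<or> a = v + 4"
      using a \<open>odd v\<close> unfolding atLeastAtMost_iff by presburger
    then show thesis
      using that by blast
  qed
  then show "a \<in> (\<lambda>i. (v * i) mod (3 ^ (2 * h + 1) - 1)) ` T_set 1 2 (2 * h + 1)"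
  proof cases
    case 1
    then show ?thesis
      using a \<open>13 \<le> v\<close> v by (intro residue_in_T_image [where X = "2 * v - a" and r = 2]) auto
  next
    case 2
    then show ?thesis
      using a \<open>odd v\<close> v by (intro residue_in_T_image [where X = "v - a" and r = 1]) auto
  next
    case 3
    have "2 * v - 2 = 3 * (3 ^ (h - 1) - 1)"
      using v p by simp
    with 3 show ?thesis
      using \<open>13 \<le> v\<close> v by (intro residue_in_T_image [where X = "2 * v - 2" and r = 3]) auto
  next
    case 4
    have "2 * v - 4 = 3 * (3 ^ (h - 1) - 2) + 1"
      using v p \<open>13 \<le> v\<close> by simp
    with 4 show ?thesis
      using \<open>13 \<le> v\<close> v by (intro residue_in_T_image [where X = "2 * v - 4" and r = 3]) auto
  qed
qed

theorem lemma4: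
  fixes m n v \<delta> :: nat
  assumes "m mod 4 = 3" and "m > 3"
    and "n = 3^m - 1"
    and "v = (3^((m - 1) div 2) - 1) div 2"
    and "\<delta> = (3^((m - 1) div 2) + 11) div 2"
  shows "gcd v n = 1 \<and> {1..\<delta> - 1} \<subseteq> (\<lambda>i. (v * i) mod n) ` T_set 1 2 m"
proof -
  define h where "h = (m - 1) div 2"
  have m: "m = 2 * h + 1" and "odd h" and "1 < h"
    using assms(1,2) unfolding h_def by presburger+
  have v: "v = (3 ^ h - 1) div 2"
    using assms(4) unfolding h_def .
  have "3 ^ h = 2 * v + 1"
    using half_three_power_odd(1) [OF \<open>odd h\<close>] unfolding v by simp
  then have "\<delta> - 1 = v + 5"
    using assms(5) unfolding h_def [symmetric] by simp
  then show ?thesis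
    using coprime_half_three_power [OF \<open>odd h\<close>] initial_segment_subset_T_image [OF \<open>odd h\<close> \<open>1 < h\<close>]
    unfolding assms(3) v m by (simp add: coprime_iff_gcd_eq_1)
qed

end
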